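(* Let $D$ be a digraph and let $S$ be the set of all sources and sinks of $D$. Then $\operatorname{bw}(u(D))-|S|\le\operatorname{dbw}(D)\le\operatorname{bw}(u(D))$.
   Context: All digraphs are finite and loopless. A source has no incoming edges, a sink no outgoing edges. $u(D)$ is the undirected multigraph with one edge $xy$ per directed edge $\vec{xy}$. Branch-width of an undirected multigraph $G$: minimum over pairs $(T,\tau)$ ($T$ a tree of maximum degree at most three, $\tau$ a bijection from leaves of $T$ onto $E(G)$) of the maximum over edges $t$ of $T$ of the number of vertices incident both with an edge of $\tau(Y)$ and an edge of $E(G)\setminus\tau(Y)$, $Y$ being the leaves on one side of $T-t$ (width 0 if $T$ has no edges). Directed branch-width $\operatorname{dbw}(D)$: same, with $\beta$ a bijection from leaves onto $E(D)$ and the order of $t$ equal to $|S^V_{\beta(Y)}\cup S^V_{E(D)\setminus\beta(Y)}|$, where $S^V_X=\{y: \exists x,z,\ \vec{xy}\in E(D)\setminus X,\ \vec{yz}\in X\}$. *)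

theory Defs
  imports Main "Graph_Theory.Digraph"
begin

text \<open>A tree is given by a finite node set N and a set TE of undirected edges,
each a two-element subset of N. Every finite tree is isomorphic to one on nat nodes.\<close>

definition tree_adj :: "nat set set \<Rightarrow> (nat \<times> nat) set" where
  "tree_adj TE = {(x, y). {x, y} \<in> TE}"

definition tdeg :: "nat set set \<Rightarrow> nat \<Rightarrow> nat" where
  "tdeg TE v = card {e \<in> TE. v \<in> e}"

definition is_tree :: "nat set \<Rightarrow> nat set set \<Rightarrow> bool" where
  "is_tree N TE \<longleftrightarrow> finite N
     \<and> (\<forall>e\<in>TE. e \<subseteq> N \<and> card e = 2)
     \<and> (\<forall>x\<in>N. \<forall>y\<in>N. (x, y) \<in> (tree_adj TE)\<^sup>*)
     \<and> card TE + 1 = card N"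

definition cubic_tree :: "nat set \<Rightarrow> nat set set \<Rightarrow> bool" where
  "cubic_tree N TE \<longleftrightarrow> (is_tree N TE \<or> (N = {} \<and> TE = {})) \<and> (\<forall>v\<in>N. tdeg TE v \<le> 3)"

definition tleaves :: "nat set \<Rightarrow> nat set set \<Rightarrow> nat set" where
  "tleaves N TE = {v \<in> N. tdeg TE v \<le> 1}"

definition tside :: "nat set \<Rightarrow> nat set set \<Rightarrow> nat \<Rightarrow> nat \<Rightarrow> nat set" where
  "tside N TE a b = {l \<in> tleaves N TE. (a, l) \<in> (tree_adj (TE - {{a, b}}))\<^sup>*}"

definition is_branch_decomp :: "'e set \<Rightarrow> nat set \<Rightarrow> nat set set \<Rightarrow> (nat \<Rightarrow> 'e) \<Rightarrow> bool" where
  "is_branch_decomp E N TE \<beta> \<longleftrightarrow> cubic_tree N TE \<and> bij_betw \<beta> (tleaves N TE) E"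

definition decomp_width :: "('e set \<Rightarrow> nat) \<Rightarrow> nat set \<Rightarrow> nat set set \<Rightarrow> (nat \<Rightarrow> 'e) \<Rightarrow> nat" where
  "decomp_width ord N TE \<beta> =
     Max ({0} \<union> {ord (\<beta> ` tside N TE a b) | a b. {a, b} \<in> TE})"

definition branch_width_wrt :: "'e set \<Rightarrow> ('e set \<Rightarrow> nat) \<Rightarrow> nat" where
  "branch_width_wrt E ord =
     (LEAST k. \<exists>N TE \<beta>. is_branch_decomp E N TE \<beta> \<and> decomp_width ord N TE \<beta> = k)"

text \<open>u(D) has edge set arcs D, the edge e joining tail D e and head D e.\<close>
definition arc_ends :: "('a, 'b) pre_digraph \<Rightarrow> 'b \<Rightarrow> 'a set" where
  "arc_ends D e = {tail D e, head D e}"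

definition u_order :: "('a, 'b) pre_digraph \<Rightarrow> 'b set \<Rightarrow> nat" where
  "u_order D X = card {v. (\<exists>e\<in>X. v \<in> arc_ends D e) \<and> (\<exists>e\<in>arcs D - X. v \<in> arc_ends D e)}"

definition bw_u :: "('a, 'b) pre_digraph \<Rightarrow> nat" where
  "bw_u D = branch_width_wrt (arcs D) (u_order D)"

definition SV :: "('a, 'b) pre_digraph \<Rightarrow> 'b set \<Rightarrow> 'a set" where
  "SV D X = {y. \<exists>e\<in>arcs D - X. \<exists>f\<in>X. head D e = y \<and> tail D f = y}"

definition d_order :: "('a, 'b) pre_digraph \<Rightarrow> 'b set \<Rightarrow> nat" where
  "d_order D X = card (SV D X \<union> SV D (arcs D - X))"

definition dbw :: "('a, 'b) pre_digraph \<Rightarrow> nat" where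
  "dbw D = branch_width_wrt (arcs D) (d_order D)"

definition sources_sinks :: "('a, 'b) pre_digraph \<Rightarrow> 'a set" where
  "sources_sinks D = {v \<in> verts D. in_arcs D v = {} \<or> out_arcs D v = {}}"

end

theory Submission
  imports Defs
begin

text \<open>Both widths are minima over the same branch decompositions, so it suffices to compare
the two order functions on every arc set X. A vertex in S^V of X or of its complement has an
arc on each side, so it is a boundary vertex of X in u(D). Conversely, let v be a boundary vertex
that is neither a source nor a sink. If v were in neither S^V set, then every in-arc of v
would lie on the same side as every out-arc of v, so all arcs at v would lie on one side,
contradicting that v is on the boundary. Hence the orders differ by at most |S|.\<close>

lemma finite_tree_edge_image:
  assumes "cubic_tree N TE"
  shows "finite {f a b | a b. {a, b} \<in> TE}"
proof -
  have "{f a b | a b. {a, b} \<in> TE} \<subseteq> (\<lambda>(a, b). f a b) ` (N \<times> N)"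
    using assms unfolding cubic_tree_def is_tree_def by fastforce
  moreover have "finite N"
    using assms unfolding cubic_tree_def is_tree_def by auto
  ultimately show ?thesis
    by (meson finite_SigmaI finite_imageI finite_subset)
qed

lemma decomp_width_le_add:
  assumes bd: "is_branch_decomp E N TE \<beta>"
    and le: "\<And>X. X \<subseteq> E \<Longrightarrow> ord1 X \<le> ord2 X + c"
  shows "decomp_width ord1 N TE \<beta> \<le> decomp_width ord2 N TE \<beta> + c"
proof -
  let ?W = "\<lambda>ord. {0} \<union> {ord (\<beta> ` tside N TE a b) | a b. {a, b} \<in> TE}"
  have ct: "cubic_tree N TE" and sides: "\<And>a b. \<beta> ` tside N TE a b \<subseteq> E"
    using bd unfolding is_branch_decomp_def tside_def bij_betw_def by auto
  have "x \<le> Max (?W ord2) + c" if x: "x \<in> ?W ord1" for x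
  proof (cases "x = 0")
    case False
    then obtain a b where x: "x = ord1 (\<beta> ` tside N TE a b)" and ab: "{a, b} \<in> TE"
      using x by blast
    have "ord2 (\<beta> ` tside N TE a b) \<le> Max (?W ord2)"
      using ab finite_tree_edge_image[OF ct] by (intro Max_ge) auto
    then show ?thesis
      using le[OF sides, of a b] x by linarith
  qed simp
  then show ?thesis
    unfolding decomp_width_def using finite_tree_edge_image[OF ct] by (subst Max_le_iff) auto
qed

lemma branch_width_wrt_le_add:
  assumes "\<And>X. X \<subseteq> E \<Longrightarrow> ord1 X \<le> ord2 X + c"
  shows "branch_width_wrt E ord1 \<le> branch_width_wrt E ord2 + c"
proof (cases "\<exists>N TE \<beta>. is_branch_decomp E N TE \<beta>")
  case True
  let ?P = "\<lambda>ord k. \<exists>N TE \<beta>. is_branch_decomp E N TE \<beta> \<and> decomp_width ord N TE \<beta> = k"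
  from True obtain N TE \<beta> where "is_branch_decomp E N TE \<beta>"
    by blast
  then have "?P ord2 (decomp_width ord2 N TE \<beta>)"
    by blast
  then have "?P ord2 (Least (?P ord2))"
    by (rule LeastI)
  then obtain N TE \<beta> where bd: "is_branch_decomp E N TE \<beta>"
    and opt: "decomp_width ord2 N TE \<beta> = Least (?P ord2)"
    by blast
  have "Least (?P ord1) \<le> decomp_width ord1 N TE \<beta>"
    using bd by (intro Least_le) blast
  also have "\<dots> \<le> decomp_width ord2 N TE \<beta> + c"
    using decomp_width_le_add[OF bd assms] .
  finally show ?thesis
    unfolding branch_width_wrt_def using opt by simp
next
  case False
  then show ?thesis
    unfolding branch_width_wrt_def by simp
qed

definition u_boundary :: "('a, 'b) pre_digraph \<Rightarrow> 'b set \<Rightarrow> 'a set" where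
  "u_boundary D X = {v. (\<exists>e\<in>X. v \<in> arc_ends D e) \<and> (\<exists>e\<in>arcs D - X. v \<in> arc_ends D e)}"

lemma u_order_eq_card_u_boundary: "u_order D X = card (u_boundary D X)"
  unfolding u_order_def u_boundary_def ..

lemma (in wf_digraph) u_boundary_subset_verts: "u_boundary G X \<subseteq> verts G"
  unfolding u_boundary_def arc_ends_def by auto

lemma SV_Un_subset_u_boundary:
  assumes "X \<subseteq> arcs D"
  shows "SV D X \<union> SV D (arcs D - X) \<subseteq> u_boundary D X"
proof
  fix v assume "v \<in> SV D X \<union> SV D (arcs D - X)"
  then obtain e f where "e \<in> arcs D" "f \<in> arcs D" "head D e = v" "tail D f = v"
    and "e \<in> X \<longleftrightarrow> f \<notin> X"
    using assms unfolding SV_def by auto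
  moreover from this have "v \<in> arc_ends D e" "v \<in> arc_ends D f"
    unfolding arc_ends_def by auto
  ultimately show "v \<in> u_boundary D X"
    unfolding u_boundary_def by blast
qed

lemma in_arc_out_arc_same_side:
  assumes "X \<subseteq> arcs D" and "v \<notin> SV D X \<union> SV D (arcs D - X)"
    and "a \<in> in_arcs D v" and "b \<in> out_arcs D v"
  shows "a \<in> X \<longleftrightarrow> b \<in> X"
  using assms unfolding SV_def by auto

lemma (in wf_digraph) u_boundary_subset_SV_Un_sources_sinks:
  assumes X: "X \<subseteq> arcs G"
  shows "u_boundary G X \<subseteq> SV G X \<union> SV G (arcs G - X) \<union> sources_sinks G"
proof
  fix v assume v: "v \<in> u_boundary G X"
  show "v \<in> SV G X \<union> SV G (arcs G - X) \<union> sources_sinks G"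
  proof (rule ccontr)
    assume nv: "v \<notin> SV G X \<union> SV G (arcs G - X) \<union> sources_sinks G"
    have "v \<in> verts G"
      using v u_boundary_subset_verts by blast
    then obtain a b where a: "a \<in> in_arcs G v" and b: "b \<in> out_arcs G v"
      using nv unfolding sources_sinks_def by blast
    have same: "a' \<in> X \<longleftrightarrow> b' \<in> X" if "a' \<in> in_arcs G v" "b' \<in> out_arcs G v" for a' b'
      using in_arc_out_arc_same_side[OF X _ that] nv by blast
    have same_side: "e \<in> X \<longleftrightarrow> b \<in> X" if "e \<in> arcs G" "v \<in> arc_ends G e" for e
    proof (cases "head G e = v")
      case True
      then show ?thesis
        using same[OF _ b] that(1) by simp
    next
      case False
      then have "e \<in> out_arcs G v"
        using that unfolding arc_ends_def by auto
      then show ?thesis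
        using same[OF a] b by blast
    qed
    obtain e1 e2 where "e1 \<in> X" "v \<in> arc_ends G e1" "e2 \<in> arcs G - X" "v \<in> arc_ends G e2"
      using v unfolding u_boundary_def by blast
    then show False
      using same_side X by blast
  qed
qed

lemma (in fin_digraph) finite_u_boundary: "finite (u_boundary G X)"
  using u_boundary_subset_verts finite_verts by (rule finite_subset)

lemma (in fin_digraph) d_order_le_u_order:
  assumes "X \<subseteq> arcs G"
  shows "d_order G X \<le> u_order G X"
  unfolding d_order_def u_order_eq_card_u_boundary
  using finite_u_boundary SV_Un_subset_u_boundary[OF assms] by (rule card_mono)

lemma (in fin_digraph) u_order_le_d_order_add_sources_sinks:
  assumes "X \<subseteq> arcs G"
  shows "u_order G X \<le> d_order G X + card (sources_sinks G)"
proof -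
  have "finite (sources_sinks G)"
    unfolding sources_sinks_def by simp
  then have "finite (SV G X \<union> SV G (arcs G - X) \<union> sources_sinks G)"
    using finite_subset[OF SV_Un_subset_u_boundary[OF assms] finite_u_boundary] by blast
  then have "u_order G X \<le> card (SV G X \<union> SV G (arcs G - X) \<union> sources_sinks G)"
    unfolding u_order_eq_card_u_boundary
    using u_boundary_subset_SV_Un_sources_sinks[OF assms] by (rule card_mono)
  also have "\<dots> \<le> d_order G X + card (sources_sinks G)"
    unfolding d_order_def by (rule card_Un_le)
  finally show ?thesis .
qed

theorem mainTheorem10:
  fixes D :: "('a, 'b) pre_digraph"
  assumes "fin_digraph D" and "loopfree_digraph D"
  shows "int (bw_u D) - int (card (sources_sinks D)) \<le> int (dbw D)
       \<and> dbw D \<le> bw_u D"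
proof -
  interpret fin_digraph D by (fact assms(1))
  have "dbw D \<le> bw_u D + 0"
    unfolding dbw_def bw_u_def
    by (rule branch_width_wrt_le_add) (simp add: d_order_le_u_order)
  moreover have "bw_u D \<le> dbw D + card (sources_sinks D)"
    unfolding dbw_def bw_u_def
    by (rule branch_width_wrt_le_add) (rule u_order_le_d_order_add_sources_sinks)
  ultimately show ?thesis by simp
qed

end
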